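(* Let $\mathbf{A}\in\mathbb{R}^{(\ell m)\times(qn)}$ be a block matrix with $\ell\times q$ blocks of size $m\times n$, and let $\mathbf{B}=\mathbf{S}_{\ell,m}\mathbf{A}\mathbf{S}_{q,n}^\top$. Let $\mathscr{A}$, $\mathscr{B}$, $\mathscr{E}$, $\mathscr{F}$ be the inner blockspan, outer blockspan, outer structure space and inner structure space of $\mathbf{A}$. Then $\mathscr{B}\subseteq\mathscr{E}$ and $\mathscr{A}\subseteq\mathscr{F}$.
   Context: Block conventions: $\mathbf{A}^{(\gamma,\delta)}\in\mathbb{R}^{m\times n}$ is the block of $\mathbf{A}$ in block position $(\gamma,\delta)\in[\ell]\times[q]$, with $\mathbf{A}^{(\gamma,\delta)}_{\alpha\beta}=\mathbf{A}_{(\gamma-1)m+\alpha,(\delta-1)n+\beta}$. For $a,b\ge1$, $s=ab$, the shuffle matrix $\mathbf{S}_{a,b}\in\mathbb{R}^{s\times s}$ has row $(i-1)a+j$ equal to $\mathbf{e}^\top_{(j-1)b+i}$ ($i\in[b]$, $j\in[a]$). $\mathbf{B}\in\mathbb{R}^{(m\ell)\times(nq)}$ is viewed as an $m\times n$ grid of $\ell\times q$ blocks $\mathbf{B}^{(\alpha,\beta)}$, with $\mathbf{B}^{(\alpha,\beta)}_{\gamma\delta}=\mathbf{B}_{(\alpha-1)\ell+\gamma,(\beta-1)q+\delta}$. Let $\mathbf{A}_1,\dots,\mathbf{A}_p$ be the distinct nonzero blocks of $\mathbf{A}$, $\eta_k$ the number of block positions at which $\mathbf{A}_k$ occurs, and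 $\mathbf{E}_k\in\mathbb{R}^{\ell\times q}$ the location-tally matrix with $[\mathbf{E}_k]_{\gamma\delta}=1/\sqrt{\eta_k}$ if $\mathbf{A}^{(\gamma,\delta)}=\mathbf{A}_k$ and $0$ otherwise. Analogously let $\mathbf{B}_1,\dots,\mathbf{B}_\rho$ be the distinct nonzero blocks of $\mathbf{B}$, $\xi_\kappa$ the number of block positions of $\mathbf{B}$ at which $\mathbf{B}_\kappa$ occurs, and $\mathbf{F}_\kappa\in\mathbb{R}^{m\times n}$ with $[\mathbf{F}_\kappa]_{\alpha\beta}=1/\sqrt{\xi_\kappa}$ if $\mathbf{B}^{(\alpha,\beta)}=\mathbf{B}_\kappa$ and $0$ otherwise. Define $\mathscr{A}=\mathrm{span}\{\mathbf{A}_k\}$ (inner blockspan), $\mathscr{B}=\mathrm{span}\{\mathbf{B}_\kappa\}$ (outer blockspan), $\mathscr{E}=\mathrm{span}\{\mathbf{E}_k\}$ (outer structure space), $\mathscr{F}=\mathrm{span}\{\mathbf{F}_\kappa\}$ (inner structure space). *)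

theory Defs
  imports "Jordan_Normal_Form.Matrix"
begin

text \<open>All indices are 0-based. A matrix M viewed as a g1 x g2 grid of r x c blocks.\<close>

definition shuffle_mat :: "nat \<Rightarrow> nat \<Rightarrow> real mat" where
  "shuffle_mat a b = mat (a*b) (a*b)
     (\<lambda>(i,j). if j = (i mod a) * b + i div a then 1 else 0)"

definition sub_block :: "'a mat \<Rightarrow> nat \<Rightarrow> nat \<Rightarrow> nat \<Rightarrow> nat \<Rightarrow> 'a mat" where
  "sub_block M r c g d = mat r c (\<lambda>(i,j). M $$ (g*r + i, d*c + j))"

definition nz_blocks :: "real mat \<Rightarrow> nat \<Rightarrow> nat \<Rightarrow> nat \<Rightarrow> nat \<Rightarrow> real mat set" where
  "nz_blocks M r c g1 g2 =
     {sub_block M r c g d | g d. g < g1 \<and> d < g2} - {0\<^sub>m r c}"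

definition block_count :: "real mat \<Rightarrow> nat \<Rightarrow> nat \<Rightarrow> nat \<Rightarrow> nat \<Rightarrow> real mat \<Rightarrow> nat" where
  "block_count M r c g1 g2 X = card {(g,d). g < g1 \<and> d < g2 \<and> sub_block M r c g d = X}"

definition tally_mat :: "real mat \<Rightarrow> nat \<Rightarrow> nat \<Rightarrow> nat \<Rightarrow> nat \<Rightarrow> real mat \<Rightarrow> real mat" where
  "tally_mat M r c g1 g2 X = mat g1 g2 (\<lambda>(g,d).
     if sub_block M r c g d = X then 1 / sqrt (real (block_count M r c g1 g2 X)) else 0)"

definition mat_span :: "nat \<Rightarrow> nat \<Rightarrow> real mat set \<Rightarrow> real mat set" where
  "mat_span r c S = {M. M \<in> carrier_mat r c \<and>
     (\<exists>coef :: real mat \<Rightarrow> real. \<forall>i<r. \<forall>j<c. M $$ (i,j) = (\<Sum>X\<in>S. coef X * X $$ (i,j)))}"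

text \<open>A: (l*m) x (q*n), l x q grid of m x n blocks; B = S_{l,m} A S_{q,n}^T: m x n grid of l x q blocks.\<close>
definition inner_blockspan :: "real mat \<Rightarrow> nat \<Rightarrow> nat \<Rightarrow> nat \<Rightarrow> nat \<Rightarrow> real mat set" where
  "inner_blockspan A l q m n = mat_span m n (nz_blocks A m n l q)"

definition outer_structure_space :: "real mat \<Rightarrow> nat \<Rightarrow> nat \<Rightarrow> nat \<Rightarrow> nat \<Rightarrow> real mat set" where
  "outer_structure_space A l q m n =
     mat_span l q (tally_mat A m n l q ` nz_blocks A m n l q)"

definition outer_blockspan :: "real mat \<Rightarrow> nat \<Rightarrow> nat \<Rightarrow> nat \<Rightarrow> nat \<Rightarrow> real mat set" where
  "outer_blockspan B l q m n = mat_span l q (nz_blocks B l q m n)"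

definition inner_structure_space :: "real mat \<Rightarrow> nat \<Rightarrow> nat \<Rightarrow> nat \<Rightarrow> nat \<Rightarrow> real mat set" where
  "inner_structure_space B l q m n =
     mat_span m n (tally_mat B l q m n ` nz_blocks B l q m n)"

end

theory Submission
  imports Defs
begin

text \<open>Conjugation by the shuffle matrices swaps the two levels of block indexing: entry
  \<open>(\<gamma>,\<delta>)\<close> of block \<open>(\<alpha>,\<beta>)\<close> of B is entry \<open>(\<alpha>,\<beta>)\<close> of block \<open>(\<gamma>,\<delta>)\<close> of A. So block
  \<open>(\<alpha>,\<beta>)\<close> of B collects the \<open>(\<alpha>,\<beta>)\<close>-entries of all blocks of A, and grouping the block
  positions of A by the distinct block \<open>A\<^sub>k\<close> found there writes it as
  \<open>\<Sum>\<^sub>k sqrt \<eta>\<^sub>k (A\<^sub>k)\<^sub>\<alpha>\<^sub>\<beta> E\<^sub>k\<close>, the factor \<open>sqrt \<eta>\<^sub>k\<close> undoing the normalisation of \<open>E\<^sub>k\<close>.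
  Zero blocks of A contribute nothing, so they may be left out. Since A arises from B in the
  same way, the second inclusion is the first one with the roles of A and B exchanged.\<close>

lemma finite_nz_blocks: "finite (nz_blocks M r c g1 g2)"
proof -
  have "{sub_block M r c g d | g d. g < g1 \<and> d < g2}
      = (\<lambda>(g,d). sub_block M r c g d) ` ({..<g1} \<times> {..<g2})"
    by auto
  then show ?thesis unfolding nz_blocks_def by simp
qed

lemma mat_span_subset_mat_span:
  assumes "S \<subseteq> mat_span r c T"
  shows "mat_span r c S \<subseteq> mat_span r c T"
proof
  fix M assume "M \<in> mat_span r c S"
  then obtain a where M: "M \<in> carrier_mat r c"
    and a: "\<And>i j. i < r \<Longrightarrow> j < c \<Longrightarrow> M $$ (i,j) = (\<Sum>Y\<in>S. a Y * Y $$ (i,j))"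
    unfolding mat_span_def by blast
  have "\<forall>Y\<in>S. \<exists>bY. \<forall>i<r. \<forall>j<c. Y $$ (i,j) = (\<Sum>X\<in>T. bY X * X $$ (i,j))"
    using assms unfolding mat_span_def by blast
  then obtain b where
    b: "\<And>Y i j. Y \<in> S \<Longrightarrow> i < r \<Longrightarrow> j < c \<Longrightarrow> Y $$ (i,j) = (\<Sum>X\<in>T. b Y X * X $$ (i,j))"
    by metis
  have "M $$ (i,j) = (\<Sum>X\<in>T. (\<Sum>Y\<in>S. a Y * b Y X) * X $$ (i,j))"
    if "i < r" "j < c" for i j
  proof -
    have "M $$ (i,j) = (\<Sum>Y\<in>S. a Y * Y $$ (i,j))"
      by (rule a[OF that])
    also have "\<dots> = (\<Sum>Y\<in>S. a Y * (\<Sum>X\<in>T. b Y X * X $$ (i,j)))"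
      using b[OF _ that] by (intro sum.cong refl) presburger
    also have "\<dots> = (\<Sum>X\<in>T. \<Sum>Y\<in>S. a Y * b Y X * X $$ (i,j))"
      by (simp add: sum_distrib_left mult.assoc sum.swap[of _ _ S])
    also have "\<dots> = (\<Sum>X\<in>T. (\<Sum>Y\<in>S. a Y * b Y X) * X $$ (i,j))"
      by (simp add: sum_distrib_right)
    finally show ?thesis .
  qed
  with M show "M \<in> mat_span r c T"
    unfolding mat_span_def by (auto intro!: exI[of _ "\<lambda>X. \<Sum>Y\<in>S. a Y * b Y X"])
qed

lemma mat_in_mat_span_image:
  assumes "finite N" and "M \<in> carrier_mat r c"
    and "\<And>i j. i < r \<Longrightarrow> j < c \<Longrightarrow> M $$ (i,j) = (\<Sum>X\<in>N. f X * t X $$ (i,j))"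
  shows "M \<in> mat_span r c (t ` N)"
proof -
  have "M $$ (i,j) = (\<Sum>T\<in>t ` N. (\<Sum>X\<in>{X\<in>N. t X = T}. f X) * T $$ (i,j))"
    if "i < r" "j < c" for i j
  proof -
    have "M $$ (i,j) = (\<Sum>X\<in>N. f X * t X $$ (i,j))"
      by (rule assms(3)[OF that])
    also have "\<dots> = (\<Sum>T\<in>t ` N. \<Sum>X\<in>{X\<in>N. t X = T}. f X * t X $$ (i,j))"
      by (rule sum.image_gen[OF assms(1)])
    also have "\<dots> = (\<Sum>T\<in>t ` N. (\<Sum>X\<in>{X\<in>N. t X = T}. f X) * T $$ (i,j))"
      by (intro sum.cong refl) (simp add: sum_distrib_right)
    finally show ?thesis .
  qed
  with assms(2) show ?thesis
    unfolding mat_span_def by (auto intro!: exI[of _ "\<lambda>T. \<Sum>X\<in>{X\<in>N. t X = T}. f X"])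
qed

lemma block_count_sub_block_pos:
  assumes "g < g1" "d < g2"
  shows "block_count M r c g1 g2 (sub_block M r c g d) > 0"
proof -
  let ?P = "{(g',d'). g' < g1 \<and> d' < g2 \<and> sub_block M r c g' d' = sub_block M r c g d}"
  have "finite ?P"
    by (rule finite_subset[of _ "{..<g1} \<times> {..<g2}"]) auto
  moreover have "(g,d) \<in> ?P"
    using assms by simp
  ultimately show ?thesis
    unfolding block_count_def by (auto simp: card_gt_0_iff)
qed

lemma sub_block_entry_tally_sum:
  assumes "g < g1" "d < g2" "i < r" "j < c"
  shows "sub_block M r c g d $$ (i,j) =
    (\<Sum>X\<in>nz_blocks M r c g1 g2. sqrt (real (block_count M r c g1 g2 X)) * X $$ (i,j)
        * tally_mat M r c g1 g2 X $$ (g,d))"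
proof -
  let ?Z = "sub_block M r c g d"
  have "sqrt (real (block_count M r c g1 g2 X)) * X $$ (i,j) * tally_mat M r c g1 g2 X $$ (g,d)
      = (if X = ?Z then ?Z $$ (i,j) else 0)" for X
    using assms(1,2) block_count_sub_block_pos[OF assms(1,2), of M r c]
    by (auto simp: tally_mat_def)
  then have "(\<Sum>X\<in>nz_blocks M r c g1 g2. sqrt (real (block_count M r c g1 g2 X)) * X $$ (i,j)
        * tally_mat M r c g1 g2 X $$ (g,d))
      = (if ?Z \<in> nz_blocks M r c g1 g2 then ?Z $$ (i,j) else 0)"
    by (simp add: sum.delta' finite_nz_blocks)
  moreover have "?Z \<notin> nz_blocks M r c g1 g2 \<Longrightarrow> ?Z = 0\<^sub>m r c"
    using assms(1,2) unfolding nz_blocks_def by blast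
  ultimately show ?thesis
    using assms(3,4) by auto
qed

lemma blockspan_subset_tally_span:
  assumes "\<And>g d i j. g < g1 \<Longrightarrow> d < g2 \<Longrightarrow> i < r \<Longrightarrow> j < c \<Longrightarrow>
      sub_block Q g1 g2 i j $$ (g,d) = sub_block P r c g d $$ (i,j)"
  shows "mat_span g1 g2 (nz_blocks Q g1 g2 r c)
    \<subseteq> mat_span g1 g2 (tally_mat P r c g1 g2 ` nz_blocks P r c g1 g2)"
proof (rule mat_span_subset_mat_span, rule subsetI)
  fix Y assume "Y \<in> nz_blocks Q g1 g2 r c"
  then obtain i j where ij: "i < r" "j < c" and Y: "Y = sub_block Q g1 g2 i j"
    unfolding nz_blocks_def by blast
  show "Y \<in> mat_span g1 g2 (tally_mat P r c g1 g2 ` nz_blocks P r c g1 g2)"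
  proof (rule mat_in_mat_span_image[OF finite_nz_blocks])
    show "Y \<in> carrier_mat g1 g2"
      unfolding Y sub_block_def by simp
    fix g d assume "g < g1" "d < g2"
    with ij show "Y $$ (g,d) = (\<Sum>X\<in>nz_blocks P r c g1 g2.
        sqrt (real (block_count P r c g1 g2 X)) * X $$ (i,j) * tally_mat P r c g1 g2 X $$ (g,d))"
      unfolding Y assms[OF \<open>g < g1\<close> \<open>d < g2\<close> ij]
      by (simp add: sub_block_entry_tally_sum mult.assoc)
  qed
qed

lemma mixed_radix_less:
  fixes x y a b :: nat
  assumes "x < a" "y < b"
  shows "x * b + y < a * b"
proof -
  have "x * b + y < Suc x * b"
    using assms(2) by simp
  also have "\<dots> \<le> a * b"
    using assms(1) by (intro mult_le_mono1) simp
  finally show ?thesis .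
qed

lemma shuffle_index_less:
  fixes a b i :: nat
  assumes "i < a * b"
  shows "(i mod a) * b + i div a < a * b"
proof -
  have "a > 0"
    using assms by (cases a) auto
  with assms show ?thesis
    by (intro mixed_radix_less) (auto simp: less_mult_imp_div_less mult.commute)
qed

lemma shuffle_mat_carrier: "shuffle_mat a b \<in> carrier_mat (a * b) (a * b)"
  unfolding shuffle_mat_def by simp

lemma index_shuffle_mat_mult:
  assumes "M \<in> carrier_mat (a * b) k" "i < a * b" "j < k"
  shows "(shuffle_mat a b * M) $$ (i,j) = M $$ ((i mod a) * b + i div a, j)"
proof -
  let ?p = "(i mod a) * b + i div a"
  have "(shuffle_mat a b * M) $$ (i,j) = (\<Sum>x<a * b. (if x = ?p then 1 else 0) * M $$ (x,j))"
    using assms unfolding shuffle_mat_def by (simp add: scalar_prod_def atLeast0LessThan)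
  also have "\<dots> = (\<Sum>x<a * b. if x = ?p then M $$ (x,j) else 0)"
    by (intro sum.cong) auto
  also have "\<dots> = M $$ (?p, j)"
    using shuffle_index_less[OF assms(2)] by simp
  finally show ?thesis .
qed

lemma index_mult_transpose_shuffle_mat:
  assumes "M \<in> carrier_mat k (a * b)" "i < k" "j < a * b"
  shows "(M * transpose_mat (shuffle_mat a b)) $$ (i,j) = M $$ (i, (j mod a) * b + j div a)"
proof -
  have "M * transpose_mat (shuffle_mat a b) = transpose_mat (shuffle_mat a b * transpose_mat M)"
    using transpose_mult[OF shuffle_mat_carrier transpose_carrier_mat[THEN iffD2, OF assms(1)]] by simp
  also have "\<dots> $$ (i,j) = (shuffle_mat a b * transpose_mat M) $$ (j,i)"
    using assms shuffle_mat_carrier[of a b] by simp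
  also have "\<dots> = M $$ (i, (j mod a) * b + j div a)"
    using assms shuffle_index_less[OF assms(3)] by (simp add: index_shuffle_mat_mult)
  finally show ?thesis .
qed

lemma sub_block_shuffle_conj:
  fixes A :: "real mat"
  assumes A: "A \<in> carrier_mat (l * m) (q * n)"
    and B: "B = shuffle_mat l m * A * transpose_mat (shuffle_mat q n)"
    and "\<gamma> < l" "\<delta> < q" "\<alpha> < m" "\<beta> < n"
  shows "sub_block B l q \<alpha> \<beta> $$ (\<gamma>,\<delta>) = sub_block A m n \<gamma> \<delta> $$ (\<alpha>,\<beta>)"
proof -
  have row: "\<alpha> * l + \<gamma> < l * m"
    using mixed_radix_less[of \<alpha> m \<gamma> l] assms(3,5) by (simp add: mult.commute)
  have col: "\<beta> * q + \<delta> < q * n"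
    using mixed_radix_less[of \<beta> n \<delta> q] assms(4,6) by (simp add: mult.commute)
  have col': "\<delta> * n + \<beta> < q * n"
    using mixed_radix_less assms(4,6) by blast
  have SA: "shuffle_mat l m * A \<in> carrier_mat (l * m) (q * n)"
    using shuffle_mat_carrier A by (rule mult_carrier_mat)
  have "B $$ (\<alpha> * l + \<gamma>, \<beta> * q + \<delta>) = (shuffle_mat l m * A) $$ (\<alpha> * l + \<gamma>, \<delta> * n + \<beta>)"
    using index_mult_transpose_shuffle_mat[OF SA row col] assms(4) unfolding B by simp
  also have "\<dots> = A $$ (\<gamma> * m + \<alpha>, \<delta> * n + \<beta>)"
    using index_shuffle_mat_mult[OF A row col'] assms(3) by simp
  finally show ?thesis
    using assms(3-6) unfolding sub_block_def by simp
qed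

theorem proposition1:
  fixes A B :: "real mat" and l q m n :: nat
  assumes "A \<in> carrier_mat (l * m) (q * n)"
    and "B = shuffle_mat l m * A * transpose_mat (shuffle_mat q n)"
  shows "outer_blockspan B l q m n \<subseteq> outer_structure_space A l q m n
     \<and> inner_blockspan A l q m n \<subseteq> inner_structure_space B l q m n"
proof
  note blocks = sub_block_shuffle_conj[OF assms]
  show "outer_blockspan B l q m n \<subseteq> outer_structure_space A l q m n"
    unfolding outer_blockspan_def outer_structure_space_def
    by (rule blockspan_subset_tally_span) (rule blocks)
  show "inner_blockspan A l q m n \<subseteq> inner_structure_space B l q m n"
    unfolding inner_blockspan_def inner_structure_space_def
    by (rule blockspan_subset_tally_span) (rule blocks[symmetric])
qed

end
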